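(* For every $\epsilon>0$ there is $\epsilon'>0$ depending only on $\epsilon$ such that for every $f:\{0,1\}^n\to\{-1,1\}$ with $\|f\|_{U_3}\ge\epsilon$, $$\mathbb E_{x,y}\sum_{\alpha,\beta}\hat{f_x}^2(\alpha)\,\hat{f_y}^2(\beta)\,\widehat{f_{x+y}}^2(\alpha+\beta)\ge\epsilon'.$$
   Context: $\{0,1\}^n$ is identified with $\mathbb F_2^n$; $x,y$ independent uniform. $\hat h(\alpha)=\mathbb E_z h(z)(-1)^{\langle\alpha,z\rangle}$; $f_y(x)=f(x)f(x+y)$. $\|f\|_{U_3}=\big[\mathbb E_{x,y_1,y_2,y_3}\prod_{S\subseteq[3]} f(x+\sum_{i\in S}y_i)\big]^{1/8}$. *)

theory Defs
  imports Complex_Main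
begin

text \<open>F_2^n is represented by boolean lists of length n; addition is pointwise xor.\<close>

definition cube :: "nat \<Rightarrow> bool list set" where
  "cube n = {xs. length xs = n}"

definition vadd :: "bool list \<Rightarrow> bool list \<Rightarrow> bool list" where
  "vadd xs ys = map2 (\<noteq>) xs ys"

text \<open>Inner product over F_2, returned as the number of common ones (its parity matters).\<close>
definition ip :: "bool list \<Rightarrow> bool list \<Rightarrow> nat" where
  "ip xs ys = length (filter id (map2 (\<and>) xs ys))"

definition expect :: "nat \<Rightarrow> (bool list \<Rightarrow> real) \<Rightarrow> real" where
  "expect n g = (\<Sum>x\<in>cube n. g x) / 2 ^ n"

definition fourier :: "nat \<Rightarrow> (bool list \<Rightarrow> real) \<Rightarrow> bool list \<Rightarrow> real" where
  "fourier n h a = expect n (\<lambda>z. h z * (-1) ^ ip a z)"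

definition fder :: "(bool list \<Rightarrow> real) \<Rightarrow> bool list \<Rightarrow> bool list \<Rightarrow> real" where
  "fder f y = (\<lambda>x. f x * f (vadd x y))"

definition u3norm :: "nat \<Rightarrow> (bool list \<Rightarrow> real) \<Rightarrow> real" where
  "u3norm n f = root 8 (expect n (\<lambda>x. expect n (\<lambda>y1. expect n (\<lambda>y2. expect n (\<lambda>y3.
      f x * f (vadd x y1) * f (vadd x y2) * f (vadd x y3)
      * f (vadd (vadd x y1) y2) * f (vadd (vadd x y1) y3) * f (vadd (vadd x y2) y3)
      * f (vadd (vadd (vadd x y1) y2) y3))))))"

end

theory Submission
  imports Defs "HOL-Analysis.Convex"
begin

text \<open>
  Write \<open>g\<^sub>w = f\<^sub>w\<close> and \<open>p\<^sub>w(\<gamma>) = \<hat>g\<^sub>w(\<gamma>)\<^sup>2\<close>. Fourier analysis turns both sides into moments of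
  the weights \<open>p\<^sub>w\<close>: \<open>\<parallel>f\<parallel>\<^sub>U\<^sub>3\<^sup>8 = \<bbbE>\<^sub>w \<Sum>\<^sub>\<gamma> p\<^sub>w(\<gamma>)\<^sup>2\<close> (the \<open>U\<^sub>2\<close> norm of each derivative), while the
  triple sum equals \<open>\<bbbE>\<^sub>w \<Sum>\<^sub>\<gamma> p\<^sub>w(\<gamma>)\<^sup>3\<close>, because the squared coefficients of \<open>g\<^sub>x\<close> are the Fourier
  coefficients of its autocorrelation, and the autocorrelation of \<open>f\<^sub>x\<close> at \<open>w\<close> is symmetric
  in \<open>x\<close> and \<open>w\<close>. For Boolean \<open>f\<close>, Parseval gives \<open>\<Sum>\<^sub>\<gamma> p\<^sub>w(\<gamma>) = 1\<close>, so Cauchy--Schwarz yields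
  \<open>(\<Sum> p\<^sub>w\<^sup>2)\<^sup>2 \<le> \<Sum> p\<^sub>w\<^sup>3\<close>, and a second Cauchy--Schwarz over \<open>w\<close> gives the bound with
  \<open>\<epsilon>' = \<epsilon>\<^sup>1\<^sup>6\<close>.
\<close>

lemma vadd_Nil [simp]: "vadd [] ys = []" "vadd xs [] = []"
  by (simp_all add: vadd_def)

lemma vadd_Cons [simp]: "vadd (x # xs) (y # ys) = (x \<noteq> y) # vadd xs ys"
  by (simp add: vadd_def)

lemma length_vadd [simp]: "length (vadd x y) = min (length x) (length y)"
  by (simp add: vadd_def)

lemma vadd_comm: "vadd x y = vadd y x"
proof (induction x arbitrary: y)
  case (Cons a x) then show ?case by (cases y) auto
qed simp

lemma vadd_assoc: "vadd (vadd x y) z = vadd x (vadd y z)"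
proof (induction x arbitrary: y z)
  case (Cons a x) then show ?case by (cases y; cases z) auto
qed simp

lemma vadd_left_commute: "vadd x (vadd y z) = vadd y (vadd x z)"
  by (metis vadd_assoc vadd_comm)

lemmas vadd_ac = vadd_assoc vadd_comm vadd_left_commute

lemma vadd_vadd_cancel: "length x \<le> length c \<Longrightarrow> vadd (vadd x c) c = x"
proof (induction x arbitrary: c)
  case (Cons a x) then show ?case by (cases c) auto
qed simp

lemma mem_cube_iff: "x \<in> cube n \<longleftrightarrow> length x = n"
  by (simp add: cube_def)

lemma vadd_in_cube [intro]: "x \<in> cube n \<Longrightarrow> y \<in> cube n \<Longrightarrow> vadd x y \<in> cube n"
  by (simp add: cube_def)

lemma vadd_eq_zero_iff:
  "z \<in> cube n \<Longrightarrow> w \<in> cube n \<Longrightarrow> vadd z w = replicate n False \<longleftrightarrow> z = w"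
  unfolding mem_cube_iff
proof (induction z arbitrary: w n)
  case (Cons a z) then show ?case by (cases w; cases n) auto
qed simp

lemma cube_eq_lists: "cube n = {xs. set xs \<subseteq> UNIV \<and> length xs = n}"
  by (simp add: cube_def)

lemma finite_cube [simp]: "finite (cube n)"
  unfolding cube_eq_lists by (rule finite_lists_length_eq) simp

lemma card_cube [simp]: "card (cube n) = 2 ^ n"
  using card_lists_length_eq[of "UNIV :: bool set" n] by (simp add: cube_eq_lists)

lemma cube_Suc: "cube (Suc n) = Cons True ` cube n \<union> Cons False ` cube n"
  by (auto simp: cube_def length_Suc_conv)

lemma sum_cube_Suc:
  "(\<Sum>x\<in>cube (Suc n). g x) = (\<Sum>a\<in>cube n. g (True # a)) + (\<Sum>a\<in>cube n. g (False # a))"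
  unfolding cube_Suc by (subst sum.union_disjoint) (auto simp: sum.reindex)

lemma ip_Nil [simp]: "ip [] z = 0" "ip a [] = 0"
  by (simp_all add: ip_def)

lemma ip_Cons [simp]: "ip (x # xs) (y # ys) = (if x \<and> y then Suc (ip xs ys) else ip xs ys)"
  by (simp add: ip_def)

lemma ip_comm: "ip a z = ip z a"
proof (induction a arbitrary: z)
  case (Cons c a) then show ?case by (cases z) auto
qed simp

definition walsh :: "bool list \<Rightarrow> bool list \<Rightarrow> real" where
  "walsh a z = (-1) ^ ip a z"

lemma walsh_commute: "walsh a z = walsh z a"
  by (simp add: walsh_def ip_comm)

lemma walsh_mult_self: "walsh a z * walsh a z = 1"
  by (simp add: walsh_def flip: power_add)

lemma walsh_vadd_right: "length z = length w \<Longrightarrow> walsh a (vadd z w) = walsh a z * walsh a w"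
  unfolding walsh_def
proof (induction a arbitrary: z w)
  case (Cons c x) then show ?case by (cases z; cases w) (auto simp: power_add)
qed simp

lemma walsh_vadd_left:
  "\<alpha> \<in> cube n \<Longrightarrow> \<beta> \<in> cube n \<Longrightarrow> walsh (vadd \<alpha> \<beta>) w = walsh \<alpha> w * walsh \<beta> w"
  by (metis walsh_vadd_right walsh_commute mem_cube_iff)

lemma sum_walsh:
  "z \<in> cube n \<Longrightarrow> (\<Sum>a\<in>cube n. walsh a z) = (if z = replicate n False then 2 ^ n else 0)"
proof (induction n arbitrary: z)
  case 0 then show ?case by (simp add: cube_def walsh_def)
next
  case (Suc n)
  then obtain b z' where z: "z = b # z'" "z' \<in> cube n"
    by (cases z) (auto simp: cube_def)
  have "(\<Sum>a\<in>cube (Suc n). walsh a z) = (if b then 0 else 2 * (\<Sum>a\<in>cube n. walsh a z'))"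
    by (auto simp: sum_cube_Suc z walsh_def sum_distrib_left simp flip: sum.distrib)
  then show ?case using Suc.IH[OF z(2)] z by auto
qed

lemma expect_cong: "(\<And>x. x \<in> cube n \<Longrightarrow> g x = h x) \<Longrightarrow> expect n g = expect n h"
  unfolding expect_def by (metis sum.cong)

lemma expect_swap:
  "expect n (\<lambda>x. expect n (\<lambda>y. g x y)) = expect n (\<lambda>y. expect n (\<lambda>x. g x y))"
  unfolding expect_def sum_divide_distrib[symmetric] by (subst sum.swap) simp

lemma expect_cmult: "expect n (\<lambda>x. c * g x) = c * expect n g"
  unfolding expect_def by (simp add: sum_distrib_left)

lemma expect_multc: "expect n (\<lambda>x. g x * c) = expect n g * c"
  unfolding expect_def by (simp add: sum_distrib_right)

lemma expect_sum: "expect n (\<lambda>x. \<Sum>a\<in>A. g a x) = (\<Sum>a\<in>A. expect n (g a))"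
  unfolding expect_def by (subst sum.swap) (simp add: sum_divide_distrib)

lemma expect_const_one: "expect n (\<lambda>x. 1) = 1"
  unfolding expect_def by simp

lemma expect_mono: "(\<And>x. x \<in> cube n \<Longrightarrow> g x \<le> h x) \<Longrightarrow> expect n g \<le> expect n h"
  unfolding expect_def by (intro divide_right_mono sum_mono) auto

lemma expect_nonneg: "(\<And>x. x \<in> cube n \<Longrightarrow> 0 \<le> g x) \<Longrightarrow> 0 \<le> expect n g"
  using expect_mono[of n "\<lambda>_. 0" g] by (simp add: expect_def)

lemma expect_vadd_shift:
  assumes c: "c \<in> cube n"
  shows "expect n (\<lambda>x. g (vadd x c)) = expect n g"
proof -
  have "(\<Sum>x\<in>cube n. g (vadd x c)) = (\<Sum>x\<in>cube n. g x)"
    by (rule sum.reindex_bij_witness[where i="\<lambda>x. vadd x c" and j="\<lambda>x. vadd x c"])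
       (use c in \<open>auto simp: vadd_vadd_cancel mem_cube_iff\<close>)
  then show ?thesis by (simp add: expect_def)
qed

lemma power2_expect_le: "(expect n g)\<^sup>2 \<le> expect n (\<lambda>x. (g x)\<^sup>2)"
proof -
  have "(\<Sum>x\<in>cube n. 1 * g x)\<^sup>2 \<le> (\<Sum>x\<in>cube n. 1\<^sup>2) * (\<Sum>x\<in>cube n. (g x)\<^sup>2)"
    by (rule Cauchy_Schwarz_ineq_sum)
  then show ?thesis
    by (simp add: expect_def power_divide power2_eq_square divide_simps mult.commute)
qed

lemma fourier_walsh: "fourier n h a = expect n (\<lambda>z. h z * walsh a z)"
  by (simp add: fourier_def walsh_def)

lemma fourier_inversion:
  assumes w: "w \<in> cube n"
  shows "(\<Sum>a\<in>cube n. fourier n h a * walsh a w) = h w"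
proof -
  have "(\<Sum>a\<in>cube n. fourier n h a * walsh a w)
      = (\<Sum>a\<in>cube n. \<Sum>z\<in>cube n. h z * walsh a (vadd z w) / 2 ^ n)"
    unfolding fourier_walsh expect_def sum_divide_distrib sum_distrib_right
    by (intro sum.cong refl) (use w in \<open>auto simp: walsh_vadd_right mem_cube_iff\<close>)
  also have "\<dots> = (\<Sum>z\<in>cube n. h z / 2 ^ n * (\<Sum>a\<in>cube n. walsh a (vadd z w)))"
    by (subst sum.swap) (simp add: sum_distrib_left)
  also have "\<dots> = (\<Sum>z\<in>cube n. if z = w then h w else 0)"
  proof (intro sum.cong refl)
    fix z assume z: "z \<in> cube n"
    then have "vadd z w \<in> cube n" using w by auto
    then show "h z / 2 ^ n * (\<Sum>a\<in>cube n. walsh a (vadd z w)) = (if z = w then h w else 0)"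
      using z w by (simp add: sum_walsh vadd_eq_zero_iff)
  qed
  also have "\<dots> = h w"
    using w by simp
  finally show ?thesis .
qed

lemma plancherel:
  "(\<Sum>a\<in>cube n. fourier n h1 a * fourier n h2 a) = expect n (\<lambda>z. h1 z * h2 z)"
proof -
  have "(\<Sum>a\<in>cube n. fourier n h1 a * fourier n h2 a)
      = expect n (\<lambda>z. h2 z * (\<Sum>a\<in>cube n. fourier n h1 a * walsh a z))"
    unfolding fourier_walsh[of n h2] expect_cmult[symmetric]
    by (simp add: expect_sum sum_distrib_left mult_ac)
  also have "\<dots> = expect n (\<lambda>z. h1 z * h2 z)"
    by (rule expect_cong) (simp add: fourier_inversion)
  finally show ?thesis .
qed

lemma parseval: "(\<Sum>a\<in>cube n. (fourier n h a)\<^sup>2) = expect n (\<lambda>z. (h z)\<^sup>2)"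
  using plancherel[of n h h] by (simp add: power2_eq_square)

lemma fourier_vadd:
  "\<alpha> \<in> cube n \<Longrightarrow> \<beta> \<in> cube n \<Longrightarrow>
   fourier n h (vadd \<alpha> \<beta>) = fourier n (\<lambda>w. h w * walsh \<alpha> w) \<beta>"
  unfolding fourier_walsh by (rule expect_cong) (simp add: walsh_vadd_left mult_ac)

lemma fourier_shift:
  assumes c: "c \<in> cube n"
  shows "fourier n (\<lambda>y. h (vadd y c)) \<gamma> = walsh \<gamma> c * fourier n h \<gamma>"
proof -
  have "fourier n (\<lambda>y. h (vadd y c)) \<gamma>
      = expect n (\<lambda>y. h (vadd y c) * walsh \<gamma> (vadd y c) * walsh \<gamma> c)"
    unfolding fourier_walsh
    by (rule expect_cong) (use c in \<open>auto simp: walsh_vadd_right mem_cube_iff mult_ac walsh_mult_self\<close>)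
  also have "\<dots> = walsh \<gamma> c * fourier n h \<gamma>"
    unfolding fourier_walsh expect_multc expect_vadd_shift[OF c, where g="\<lambda>y. h y * walsh \<gamma> y"]
    by simp
  finally show ?thesis .
qed

definition autocorr :: "nat \<Rightarrow> (bool list \<Rightarrow> real) \<Rightarrow> bool list \<Rightarrow> real" where
  "autocorr n g w = expect n (\<lambda>z. g z * g (vadd z w))"

lemma power2_fourier_eq_fourier_autocorr: "(fourier n g a)\<^sup>2 = fourier n (autocorr n g) a"
proof -
  have "(fourier n g a)\<^sup>2 = expect n (\<lambda>z. g z * walsh a z * fourier n g a)"
    by (simp add: power2_eq_square expect_multc fourier_walsh)
  also have "\<dots> = expect n (\<lambda>z. expect n (\<lambda>w. g z * g (vadd z w) * walsh a w))"
  proof (rule expect_cong)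
    fix z assume z: "z \<in> cube n"
    have "fourier n g a = expect n (\<lambda>w. g (vadd w z) * walsh a (vadd w z))"
      unfolding fourier_walsh by (rule expect_vadd_shift[OF z, symmetric])
    also have "\<dots> = expect n (\<lambda>w. g (vadd z w) * walsh a w * walsh a z)"
      by (rule expect_cong) (use z in \<open>auto simp: walsh_vadd_right mem_cube_iff vadd_comm\<close>)
    finally have "g z * walsh a z * fourier n g a
        = expect n (\<lambda>w. g z * g (vadd z w) * walsh a w * (walsh a z * walsh a z))"
      by (simp add: expect_cmult[symmetric] mult_ac)
    then show "g z * walsh a z * fourier n g a = expect n (\<lambda>w. g z * g (vadd z w) * walsh a w)"
      by (simp add: walsh_mult_self)
  qed
  also have "\<dots> = fourier n (autocorr n g) a"
    unfolding fourier_walsh autocorr_def by (subst expect_swap) (simp add: expect_multc)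
  finally show ?thesis .
qed

lemma sum_fourier_triple_product:
  "(\<Sum>\<alpha>\<in>cube n. \<Sum>\<beta>\<in>cube n. fourier n h1 \<alpha> * fourier n h2 \<beta> * fourier n h3 (vadd \<alpha> \<beta>))
   = expect n (\<lambda>w. h1 w * h2 w * h3 w)"
proof -
  have "(\<Sum>\<beta>\<in>cube n. fourier n h2 \<beta> * fourier n h3 (vadd \<alpha> \<beta>))
      = fourier n (\<lambda>w. h2 w * h3 w) \<alpha>" if \<alpha>: "\<alpha> \<in> cube n" for \<alpha>
  proof -
    have "(\<Sum>\<beta>\<in>cube n. fourier n h2 \<beta> * fourier n h3 (vadd \<alpha> \<beta>))
        = (\<Sum>\<beta>\<in>cube n. fourier n h2 \<beta> * fourier n (\<lambda>w. h3 w * walsh \<alpha> w) \<beta>)"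
      by (intro sum.cong refl) (simp add: fourier_vadd \<alpha>)
    also have "\<dots> = expect n (\<lambda>w. h2 w * (h3 w * walsh \<alpha> w))"
      by (rule plancherel)
    also have "\<dots> = fourier n (\<lambda>w. h2 w * h3 w) \<alpha>"
      by (simp add: fourier_walsh mult_ac)
    finally show ?thesis .
  qed
  then have "(\<Sum>\<alpha>\<in>cube n. \<Sum>\<beta>\<in>cube n. fourier n h1 \<alpha> * fourier n h2 \<beta> * fourier n h3 (vadd \<alpha> \<beta>))
      = (\<Sum>\<alpha>\<in>cube n. fourier n h1 \<alpha> * fourier n (\<lambda>w. h2 w * h3 w) \<alpha>)"
    by (simp add: sum_distrib_left[symmetric] mult.assoc)
  also have "\<dots> = expect n (\<lambda>w. h1 w * h2 w * h3 w)"
    by (simp add: plancherel mult_ac)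
  finally show ?thesis .
qed

lemma sum_fourier_power3:
  "expect n (\<lambda>x. expect n (\<lambda>y. h x * h y * h (vadd x y))) = (\<Sum>\<gamma>\<in>cube n. fourier n h \<gamma> ^ 3)"
proof -
  have "expect n (\<lambda>y. h x * h y * h (vadd x y))
      = (\<Sum>\<gamma>\<in>cube n. (fourier n h \<gamma>)\<^sup>2 * (h x * walsh \<gamma> x))" if x: "x \<in> cube n" for x
  proof -
    have "expect n (\<lambda>y. h x * h y * h (vadd x y)) = h x * expect n (\<lambda>y. h y * h (vadd y x))"
      by (simp add: expect_cmult[symmetric] vadd_comm mult_ac)
    also have "\<dots> = h x * (\<Sum>\<gamma>\<in>cube n. fourier n h \<gamma> * fourier n (\<lambda>y. h (vadd y x)) \<gamma>)"
      by (simp add: plancherel)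
    also have "\<dots> = (\<Sum>\<gamma>\<in>cube n. (fourier n h \<gamma>)\<^sup>2 * (h x * walsh \<gamma> x))"
      by (simp add: fourier_shift x power2_eq_square sum_distrib_left mult_ac)
    finally show ?thesis .
  qed
  then have "expect n (\<lambda>x. expect n (\<lambda>y. h x * h y * h (vadd x y)))
      = expect n (\<lambda>x. \<Sum>\<gamma>\<in>cube n. (fourier n h \<gamma>)\<^sup>2 * (h x * walsh \<gamma> x))"
    by (rule expect_cong)
  also have "\<dots> = (\<Sum>\<gamma>\<in>cube n. (fourier n h \<gamma>)\<^sup>2 * fourier n h \<gamma>)"
    by (simp add: expect_sum expect_cmult fourier_walsh)
  also have "\<dots> = (\<Sum>\<gamma>\<in>cube n. fourier n h \<gamma> ^ 3)"
    by (simp add: power2_eq_square power3_eq_cube)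
  finally show ?thesis .
qed

lemma sum_fourier_power4:
  "(\<Sum>\<gamma>\<in>cube n. fourier n g \<gamma> ^ 4)
   = expect n (\<lambda>z. expect n (\<lambda>w. expect n (\<lambda>b. g z * g (vadd z w) * g (vadd z b) * g (vadd (vadd z b) w))))"
proof -
  have autocorr_squared: "(autocorr n g w)\<^sup>2
      = expect n (\<lambda>z. expect n (\<lambda>b. g z * g (vadd z w) * g (vadd z b) * g (vadd (vadd z b) w)))" for w
  proof -
    have "(autocorr n g w)\<^sup>2 = expect n (\<lambda>z. g z * g (vadd z w) * autocorr n g w)"
      by (simp add: autocorr_def power2_eq_square expect_multc)
    also have "\<dots> = expect n (\<lambda>z. expect n (\<lambda>b. g z * g (vadd z w) * g (vadd z b) * g (vadd (vadd z b) w)))"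
    proof (rule expect_cong)
      fix z assume z: "z \<in> cube n"
      have "autocorr n g w = expect n (\<lambda>b. g (vadd b z) * g (vadd (vadd b z) w))"
        unfolding autocorr_def by (rule expect_vadd_shift[OF z, symmetric])
      then show "g z * g (vadd z w) * autocorr n g w
          = expect n (\<lambda>b. g z * g (vadd z w) * g (vadd z b) * g (vadd (vadd z b) w))"
        by (simp add: expect_cmult[symmetric] vadd_comm mult_ac)
    qed
    finally show ?thesis .
  qed
  have "(\<Sum>\<gamma>\<in>cube n. fourier n g \<gamma> ^ 4) = (\<Sum>\<gamma>\<in>cube n. (fourier n (autocorr n g) \<gamma>)\<^sup>2)"
    by (simp add: power2_fourier_eq_fourier_autocorr[symmetric] flip: power_mult)
  also have "\<dots> = expect n (\<lambda>w. (autocorr n g w)\<^sup>2)"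
    by (rule parseval)
  also have "\<dots> = expect n (\<lambda>w. expect n (\<lambda>z. expect n (\<lambda>b. g z * g (vadd z w) * g (vadd z b) * g (vadd (vadd z b) w))))"
    by (simp only: autocorr_squared)
  also have "\<dots> = expect n (\<lambda>z. expect n (\<lambda>w. expect n (\<lambda>b. g z * g (vadd z w) * g (vadd z b) * g (vadd (vadd z b) w))))"
    by (rule expect_swap)
  finally show ?thesis .
qed

lemma autocorr_fder_commute: "autocorr n (fder f x) w = autocorr n (fder f w) x"
  by (simp add: autocorr_def fder_def vadd_ac mult_ac)

lemma sum_power4_squared_le:
  fixes a :: "'a \<Rightarrow> real"
  shows "(\<Sum>i\<in>I. a i ^ 4)\<^sup>2 \<le> (\<Sum>i\<in>I. (a i)\<^sup>2) * (\<Sum>i\<in>I. a i ^ 6)"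
proof -
  have "a i * a i ^ 3 = a i ^ 4" "(a i ^ 3)\<^sup>2 = a i ^ 6" for i
    by algebra+
  then show ?thesis
    using Cauchy_Schwarz_ineq_sum[of a "\<lambda>i. a i ^ 3" I] by simp
qed

lemma u3norm_pow8:
  "u3norm n f ^ 8 = expect n (\<lambda>w. \<Sum>\<gamma>\<in>cube n. fourier n (fder f w) \<gamma> ^ 4)"
proof -
  have "expect n (\<lambda>w. \<Sum>\<gamma>\<in>cube n. fourier n (fder f w) \<gamma> ^ 4)
      = expect n (\<lambda>y1. expect n (\<lambda>x. expect n (\<lambda>y2. expect n (\<lambda>y3.
          f x * f (vadd x y1) * f (vadd x y2) * f (vadd x y3)
          * f (vadd (vadd x y1) y2) * f (vadd (vadd x y1) y3) * f (vadd (vadd x y2) y3)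
          * f (vadd (vadd (vadd x y1) y2) y3)))))"
    by (simp add: sum_fourier_power4 fder_def vadd_ac mult_ac)
  also have "\<dots> = expect n (\<lambda>x. expect n (\<lambda>y1. expect n (\<lambda>y2. expect n (\<lambda>y3.
          f x * f (vadd x y1) * f (vadd x y2) * f (vadd x y3)
          * f (vadd (vadd x y1) y2) * f (vadd (vadd x y1) y3) * f (vadd (vadd x y2) y3)
          * f (vadd (vadd (vadd x y1) y2) y3)))))"
    by (rule expect_swap)
  finally have "u3norm n f = root 8 (expect n (\<lambda>w. \<Sum>\<gamma>\<in>cube n. fourier n (fder f w) \<gamma> ^ 4))"
    by (simp add: u3norm_def)
  moreover have "0 \<le> expect n (\<lambda>w. \<Sum>\<gamma>\<in>cube n. fourier n (fder f w) \<gamma> ^ 4)"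
    by (intro expect_nonneg sum_nonneg) simp
  ultimately show ?thesis
    by simp
qed

lemma expect_sum_fourier_fder_triple:
  "expect n (\<lambda>x. expect n (\<lambda>y. \<Sum>\<alpha>\<in>cube n. \<Sum>\<beta>\<in>cube n.
      (fourier n (fder f x) \<alpha>)\<^sup>2 * (fourier n (fder f y) \<beta>)\<^sup>2
      * (fourier n (fder f (vadd x y)) (vadd \<alpha> \<beta>))\<^sup>2))
   = expect n (\<lambda>w. \<Sum>\<gamma>\<in>cube n. fourier n (fder f w) \<gamma> ^ 6)"
proof -
  let ?A = "\<lambda>x. autocorr n (fder f x)"
  have "expect n (\<lambda>x. expect n (\<lambda>y. \<Sum>\<alpha>\<in>cube n. \<Sum>\<beta>\<in>cube n.
      (fourier n (fder f x) \<alpha>)\<^sup>2 * (fourier n (fder f y) \<beta>)\<^sup>2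
      * (fourier n (fder f (vadd x y)) (vadd \<alpha> \<beta>))\<^sup>2))
    = expect n (\<lambda>x. expect n (\<lambda>y. expect n (\<lambda>w. ?A x w * ?A y w * ?A (vadd x y) w)))"
    by (simp only: power2_fourier_eq_fourier_autocorr sum_fourier_triple_product)
  also have "\<dots> = expect n (\<lambda>x. expect n (\<lambda>w. expect n (\<lambda>y. ?A x w * ?A y w * ?A (vadd x y) w)))"
    by (rule expect_cong, rule expect_swap)
  also have "\<dots> = expect n (\<lambda>w. expect n (\<lambda>x. expect n (\<lambda>y. ?A x w * ?A y w * ?A (vadd x y) w)))"
    by (rule expect_swap)
  also have "\<dots> = expect n (\<lambda>w. expect n (\<lambda>x. expect n (\<lambda>y. ?A w x * ?A w y * ?A w (vadd x y))))"
  proof (intro expect_cong)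
    fix w x y
    show "?A x w * ?A y w * ?A (vadd x y) w = ?A w x * ?A w y * ?A w (vadd x y)"
      by (simp only: autocorr_fder_commute[of n f _ w])
  qed
  also have "\<dots> = expect n (\<lambda>w. \<Sum>\<gamma>\<in>cube n. fourier n (?A w) \<gamma> ^ 3)"
    by (simp only: sum_fourier_power3)
  also have "\<dots> = expect n (\<lambda>w. \<Sum>\<gamma>\<in>cube n. fourier n (fder f w) \<gamma> ^ 6)"
    by (simp add: power2_fourier_eq_fourier_autocorr[symmetric] flip: power_mult)
  finally show ?thesis .
qed

lemma sum_power2_fourier_fder_boolean:
  assumes f: "\<forall>x\<in>cube n. f x \<in> {-1, 1}" and w: "w \<in> cube n"
  shows "(\<Sum>\<gamma>\<in>cube n. (fourier n (fder f w) \<gamma>)\<^sup>2) = 1"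
proof -
  have "(fder f w z)\<^sup>2 = 1" if z: "z \<in> cube n" for z
  proof -
    have "f z \<in> {-1, 1}" "f (vadd z w) \<in> {-1, 1}"
      using f z w by auto
    then show ?thesis
      by (auto simp: fder_def)
  qed
  then show ?thesis
    by (simp add: parseval expect_cong[where h="\<lambda>_. 1"] expect_const_one)
qed

lemma u3norm_pow16_le_triple_fourier_sum:
  assumes f: "\<forall>x\<in>cube n. f x \<in> {-1, 1}"
  shows "u3norm n f ^ 16 \<le> expect n (\<lambda>x. expect n (\<lambda>y. \<Sum>\<alpha>\<in>cube n. \<Sum>\<beta>\<in>cube n.
      (fourier n (fder f x) \<alpha>)\<^sup>2 * (fourier n (fder f y) \<beta>)\<^sup>2
      * (fourier n (fder f (vadd x y)) (vadd \<alpha> \<beta>))\<^sup>2))"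
proof -
  define X where "X = (\<lambda>w. \<Sum>\<gamma>\<in>cube n. fourier n (fder f w) \<gamma> ^ 4)"
  have "u3norm n f ^ 16 = (u3norm n f ^ 8)\<^sup>2"
    by simp
  also have "\<dots> = (expect n X)\<^sup>2"
    by (simp add: X_def u3norm_pow8)
  also have "\<dots> \<le> expect n (\<lambda>w. (X w)\<^sup>2)"
    by (rule power2_expect_le)
  also have "\<dots> \<le> expect n (\<lambda>w. \<Sum>\<gamma>\<in>cube n. fourier n (fder f w) \<gamma> ^ 6)"
  proof (rule expect_mono)
    fix w
    assume "w \<in> cube n"
    then show "(X w)\<^sup>2 \<le> (\<Sum>\<gamma>\<in>cube n. fourier n (fder f w) \<gamma> ^ 6)"
      using sum_power4_squared_le[of "fourier n (fder f w)" "cube n"]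
      by (simp add: X_def sum_power2_fourier_fder_boolean[OF f])
  qed
  finally show ?thesis
    by (simp only: expect_sum_fourier_fder_triple)
qed

theorem corollary6p6:
  shows "\<forall>\<epsilon>::real. \<epsilon> > 0 \<longrightarrow> (\<exists>\<epsilon>'::real. \<epsilon>' > 0 \<and>
    (\<forall>(n::nat) (f::bool list \<Rightarrow> real).
       (\<forall>x\<in>cube n. f x \<in> {-1, 1}) \<and> u3norm n f \<ge> \<epsilon> \<longrightarrow>
       expect n (\<lambda>x. expect n (\<lambda>y.
          \<Sum>\<alpha>\<in>cube n. \<Sum>\<beta>\<in>cube n.
            (fourier n (fder f x) \<alpha>)\<^sup>2 * (fourier n (fder f y) \<beta>)\<^sup>2
            * (fourier n (fder f (vadd x y)) (vadd \<alpha> \<beta>))\<^sup>2)) \<ge> \<epsilon>'))"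
proof -
  have "\<epsilon> ^ 16 \<le> expect n (\<lambda>x. expect n (\<lambda>y. \<Sum>\<alpha>\<in>cube n. \<Sum>\<beta>\<in>cube n.
      (fourier n (fder f x) \<alpha>)\<^sup>2 * (fourier n (fder f y) \<beta>)\<^sup>2
      * (fourier n (fder f (vadd x y)) (vadd \<alpha> \<beta>))\<^sup>2))"
    if "\<epsilon> > 0" "\<forall>x\<in>cube n. f x \<in> {-1, 1}" "\<epsilon> \<le> u3norm n f" for \<epsilon> :: real and n f
    using order_trans[OF power_mono[OF that(3)] u3norm_pow16_le_triple_fourier_sum[OF that(2)]] that(1)
    by simp
  then show ?thesis
    by (meson zero_less_power)
qed

end
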